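(* Let $\mathcal P_2$ be an $\varepsilon$-additive-approximate short path between nodes $u_0$ and $u_1$, and suppose there is a node $v$ on a shortest path between $u_0$ and $u_1$ such that $\min_{v'\in\mathcal P_2}d_{v,v'}\ge\gamma$. Then, with $\delta=\delta_{\mathrm{worst}}(G)$, $$\varepsilon>\frac{2^{\gamma/(6\delta+1)}}{48\delta+\frac{17}{2}}-\log_2(48\delta+8).$$
   Context: $G=(V,E)$ is a finite connected undirected graph with $n\ge 4$ nodes and $d_{u,v}$ denotes the shortest-path distance (number of edges). For any four nodes $w_1,\dots,w_4$, order the three sums $d_{w_1,w_2}+d_{w_3,w_4}$, $d_{w_1,w_3}+d_{w_2,w_4}$, $d_{w_1,w_4}+d_{w_2,w_3}$ as $S\le M\le L$ and set $\delta_{w_1,w_2,w_3,w_4}=(L-M)/2$; $\delta_{\mathrm{worst}}(G)=\max\delta_{w_1,w_2,w_3,w_4}$. A path $(w_0,\dots,w_k)$ is $\varepsilon$-additive-approximate short if its length (number of edges) is at most $d_{w_0,w_k}+\varepsilon$. *)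

theory Defs
  imports Complex_Main
begin

definition is_walk :: "'a set \<Rightarrow> ('a \<Rightarrow> 'a \<Rightarrow> bool) \<Rightarrow> 'a list \<Rightarrow> bool" where
  "is_walk V E p \<longleftrightarrow> p \<noteq> [] \<and> set p \<subseteq> V \<and>
     (\<forall>i. Suc i < length p \<longrightarrow> E (p ! i) (p ! Suc i))"

definition is_path :: "'a set \<Rightarrow> ('a \<Rightarrow> 'a \<Rightarrow> bool) \<Rightarrow> 'a list \<Rightarrow> bool" where
  "is_path V E p \<longleftrightarrow> is_walk V E p \<and> distinct p"

definition plen :: "'a list \<Rightarrow> nat" where
  "plen p = length p - 1"

definition path_between :: "'a set \<Rightarrow> ('a \<Rightarrow> 'a \<Rightarrow> bool) \<Rightarrow> 'a list \<Rightarrow> 'a \<Rightarrow> 'a \<Rightarrow> bool" where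
  "path_between V E p u v \<longleftrightarrow> is_path V E p \<and> hd p = u \<and> last p = v"

definition finite_connected_graph :: "'a set \<Rightarrow> ('a \<Rightarrow> 'a \<Rightarrow> bool) \<Rightarrow> bool" where
  "finite_connected_graph V E \<longleftrightarrow> finite V \<and> V \<noteq> {} \<and>
     (\<forall>x y. E x y \<longrightarrow> x \<in> V \<and> y \<in> V) \<and>
     (\<forall>x y. E x y \<longrightarrow> E y x) \<and> (\<forall>x. \<not> E x x) \<and>
     (\<forall>u\<in>V. \<forall>v\<in>V. \<exists>p. path_between V E p u v)"

definition gdist :: "'a set \<Rightarrow> ('a \<Rightarrow> 'a \<Rightarrow> bool) \<Rightarrow> 'a \<Rightarrow> 'a \<Rightarrow> nat" where
  "gdist V E u v = (LEAST k. \<exists>p. path_between V E p u v \<and> plen p = k)"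

definition shortest_path :: "'a set \<Rightarrow> ('a \<Rightarrow> 'a \<Rightarrow> bool) \<Rightarrow> 'a list \<Rightarrow> 'a \<Rightarrow> 'a \<Rightarrow> bool" where
  "shortest_path V E p u v \<longleftrightarrow> path_between V E p u v \<and> plen p = gdist V E u v"

definition approx_short_path :: "'a set \<Rightarrow> ('a \<Rightarrow> 'a \<Rightarrow> bool) \<Rightarrow> real \<Rightarrow> 'a list \<Rightarrow> 'a \<Rightarrow> 'a \<Rightarrow> bool" where
  "approx_short_path V E \<epsilon> p u v \<longleftrightarrow>
     path_between V E p u v \<and> real (plen p) \<le> real (gdist V E u v) + \<epsilon>"

definition delta4 :: "'a set \<Rightarrow> ('a \<Rightarrow> 'a \<Rightarrow> bool) \<Rightarrow> 'a \<Rightarrow> 'a \<Rightarrow> 'a \<Rightarrow> 'a \<Rightarrow> real" where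
  "delta4 V E w1 w2 w3 w4 =
    (let a = real (gdist V E w1 w2 + gdist V E w3 w4);
         b = real (gdist V E w1 w3 + gdist V E w2 w4);
         c = real (gdist V E w1 w4 + gdist V E w2 w3);
         L = max a (max b c);
         S = min a (min b c);
         M = a + b + c - L - S
     in (L - M) / 2)"

definition delta_worst :: "'a set \<Rightarrow> ('a \<Rightarrow> 'a \<Rightarrow> bool) \<Rightarrow> real" where
  "delta_worst V E = Max {delta4 V E w1 w2 w3 w4 | w1 w2 w3 w4.
      w1 \<in> V \<and> w2 \<in> V \<and> w3 \<in> V \<and> w4 \<in> V}"

end

theory Submission
  imports Defs
begin

text \<open>
  The graph metric satisfies the four-point condition with constant \<open>\<delta> = \<delta>\<^sub>w\<^sub>o\<^sub>r\<^sub>s\<^sub>t\<close>,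
  i.e.\ Gromov products satisfy \<open>(x|z)\<^sub>v \<ge> min (x|y)\<^sub>v (y|z)\<^sub>v - \<delta>\<close>. Since \<open>v\<close> lies on a
  geodesic from \<open>u\<^sub>0\<close> to \<open>u\<^sub>1\<close>, \<open>(u\<^sub>0|u\<^sub>1)\<^sub>v = 0\<close>. Split the path \<open>P\<^sub>2\<close> at a point that
  halves its excess length over the distance of its endpoints; the four-point condition keeps a
  Gromov product bound, weakened by \<open>\<delta>\<close>, on one of the halves. After \<open>k\<close> halvings with
  \<open>2\<^sup>k \<approx> \<epsilon>\<close> the excess is bounded by a constant, and a last application of the four-point
  condition finds a node of \<open>P\<^sub>2\<close> within \<open>2 (k + 1) \<delta> + 7/2\<close> of \<open>v\<close>. Hence
  \<open>\<gamma> \<le> 2 \<delta> log\<^sub>2 \<epsilon> + O(\<delta>)\<close>, which rearranges to the claimed bound.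
\<close>

section \<open>Walks and the graph distance\<close>

lemma is_walk_Cons_Cons:
  "is_walk V E (x # y # q) \<longleftrightarrow> x \<in> V \<and> E x y \<and> is_walk V E (y # q)"
  unfolding is_walk_def by (auto simp: nth_Cons split: nat.splits)

lemma is_walk_drop: "is_walk V E q \<Longrightarrow> j < length q \<Longrightarrow> is_walk V E (drop j q)"
  unfolding is_walk_def by (auto dest: in_set_dropD)

lemma is_walk_take: "is_walk V E q \<Longrightarrow> 0 < j \<Longrightarrow> is_walk V E (take j q)"
  unfolding is_walk_def by (auto dest: in_set_takeD)

lemma is_walk_rev:
  assumes "\<And>x y. E x y \<Longrightarrow> E y x" and "is_walk V E q"
  shows "is_walk V E (rev q)"
proof -
  have "E (rev q ! i) (rev q ! Suc i)" if i: "Suc i < length q" for i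
  proof -
    define j where "j = length q - Suc (Suc i)"
    have "Suc j < length q" and "length q - Suc i = Suc j" using i unfolding j_def by auto
    then have "E (q ! j) (q ! Suc j)" using assms(2) unfolding is_walk_def by blast
    then show ?thesis using i \<open>length q - Suc i = Suc j\<close> by (simp add: rev_nth j_def assms(1))
  qed
  then show ?thesis using assms(2) unfolding is_walk_def by simp
qed

lemma gdist_le_plen: "path_between V E p u v \<Longrightarrow> gdist V E u v \<le> plen p"
  unfolding gdist_def by (rule Least_le) blast

lemma gdist_refl: "u \<in> V \<Longrightarrow> gdist V E u u = 0"
  using gdist_le_plen[of V E "[u]" u u]
  by (simp add: path_between_def is_path_def is_walk_def plen_def)

lemma path_between_drop:
  assumes "path_between V E q u v" and "j < length q"
  shows "path_between V E (drop j q) (q ! j) v"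
  using assms is_walk_drop unfolding path_between_def is_path_def
  by (auto simp: hd_drop_conv_nth)

lemma path_between_take:
  assumes "path_between V E q u v" and "j < length q"
  shows "path_between V E (take (Suc j) q) u (q ! j)"
proof -
  have "last (take (Suc j) q) = q ! j" using assms(2) by (simp add: take_Suc_conv_app_nth)
  moreover have "is_walk V E (take (Suc j) q)"
    using assms(1) is_walk_take unfolding path_between_def is_path_def by blast
  ultimately show ?thesis using assms(1) unfolding path_between_def is_path_def
    by (auto simp: is_walk_def)
qed

lemma path_between_nth:
  assumes "path_between V E p u v"
  shows "plen p < length p" and "p ! 0 = u" and "p ! plen p = v"
    and "\<And>i. i \<le> plen p \<Longrightarrow> p ! i \<in> V" and "\<And>i. i < plen p \<Longrightarrow> E (p ! i) (p ! Suc i)"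
proof -
  have "p \<noteq> []" and "set p \<subseteq> V" using assms unfolding path_between_def is_path_def is_walk_def by auto
  then show "plen p < length p" unfolding plen_def by (cases p) auto
  with \<open>set p \<subseteq> V\<close> show "p ! i \<in> V" if "i \<le> plen p" for i
    using that nth_mem[of i p] by auto
  show "p ! 0 = u" and "p ! plen p = v" and "\<And>i. i < plen p \<Longrightarrow> E (p ! i) (p ! Suc i)"
    using assms \<open>p \<noteq> []\<close> unfolding path_between_def is_path_def is_walk_def plen_def
    by (auto simp: hd_conv_nth last_conv_nth)
qed

context
  fixes V :: "'a set" and E :: "'a \<Rightarrow> 'a \<Rightarrow> bool"
  assumes G: "finite_connected_graph V E"
begin

lemma obtain_shortest_path:
  assumes "u \<in> V" and "v \<in> V"
  obtains p where "shortest_path V E p u v"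
proof -
  have "\<exists>k p. path_between V E p u v \<and> plen p = k"
    using G assms unfolding finite_connected_graph_def by blast
  then have "\<exists>p. path_between V E p u v \<and> plen p = gdist V E u v"
    unfolding gdist_def by (rule LeastI_ex)
  then show ?thesis using that unfolding shortest_path_def by blast
qed

lemma gdist_edge_step:
  assumes e: "E x y" and z: "z \<in> V"
  shows "gdist V E x z \<le> 1 + gdist V E y z"
proof -
  have xy: "x \<in> V" "y \<in> V" "x \<noteq> y"
    using G e unfolding finite_connected_graph_def by blast+
  obtain q where q: "path_between V E q y z" "plen q = gdist V E y z"
    using obtain_shortest_path[OF xy(2) z] unfolding shortest_path_def by blast
  then obtain q' where q': "q = y # q'"
    unfolding path_between_def is_path_def is_walk_def by (cases q) auto
  show ?thesis
  proof (cases "x \<in> set q")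
    case True
    then obtain j where j: "j < length q" "q ! j = x" by (auto simp: in_set_conv_nth)
    have "gdist V E x z \<le> plen (drop j q)"
      using gdist_le_plen path_between_drop[OF q(1) j(1)] j(2) by metis
    also have "\<dots> \<le> plen q" by (simp add: plen_def)
    finally show ?thesis using q(2) by simp
  next
    case False
    have "path_between V E (x # q) x z"
      using q(1) q' False xy e unfolding path_between_def is_path_def
      by (simp add: is_walk_Cons_Cons)
    from gdist_le_plen[OF this] show ?thesis using q(2) q' by (simp add: plen_def)
  qed
qed

lemma gdist_edge:
  assumes "E x y"
  shows "gdist V E x y \<le> 1"
proof -
  have "y \<in> V" using G assms unfolding finite_connected_graph_def by blast
  then show ?thesis using gdist_edge_step[OF assms] gdist_refl by fastforce
qed

text \<open>Two shortest paths need not concatenate to a path, so the triangle inequality is obtained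
  edge by edge along a walk.\<close>

lemma gdist_walk_le:
  "is_walk V E q \<Longrightarrow> z \<in> V \<Longrightarrow> gdist V E (hd q) z \<le> plen q + gdist V E (last q) z"
proof (induction q rule: induct_list012)
  case (3 x y q)
  then have "gdist V E x z \<le> 1 + gdist V E y z"
    by (intro gdist_edge_step) (simp_all add: is_walk_Cons_Cons)
  with 3 show ?case by (simp add: is_walk_Cons_Cons plen_def)
qed (simp_all add: is_walk_def plen_def)

lemma gdist_triangle:
  assumes "x \<in> V" and "y \<in> V" and "z \<in> V"
  shows "gdist V E x z \<le> gdist V E x y + gdist V E y z"
proof -
  obtain q where "shortest_path V E q x y" using obtain_shortest_path assms by blast
  then show ?thesis using gdist_walk_le[of q z] assms(3)
    unfolding shortest_path_def path_between_def is_path_def by simp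
qed

lemma gdist_sym_le:
  assumes "x \<in> V" and "y \<in> V"
  shows "gdist V E y x \<le> gdist V E x y"
proof -
  obtain q where q: "shortest_path V E q x y" using obtain_shortest_path assms by blast
  have "\<And>x y. E x y \<Longrightarrow> E y x" using G unfolding finite_connected_graph_def by blast
  with q have "is_walk V E (rev q)"
    by (intro is_walk_rev) (auto simp: shortest_path_def path_between_def is_path_def)
  with q have "path_between V E (rev q) y x"
    unfolding shortest_path_def path_between_def is_path_def
    by (auto simp: hd_rev last_rev is_walk_def)
  from gdist_le_plen[OF this] q show ?thesis by (simp add: shortest_path_def plen_def)
qed

lemma gdist_sym: "x \<in> V \<Longrightarrow> y \<in> V \<Longrightarrow> gdist V E x y = gdist V E y x"
  using gdist_sym_le le_antisym by blast

end

lemma gdist_shortest_path_split: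
  assumes "shortest_path V E q u u'" and "v \<in> set q"
  shows "gdist V E u v + gdist V E v u' \<le> gdist V E u u'"
proof -
  obtain j where j: "j < length q" "q ! j = v" using assms(2) by (auto simp: in_set_conv_nth)
  have q: "path_between V E q u u'" "plen q = gdist V E u u'"
    using assms(1) unfolding shortest_path_def by auto
  have "gdist V E u v \<le> j"
    using gdist_le_plen[OF path_between_take[OF q(1) j(1)]] j by (simp add: plen_def)
  moreover have "gdist V E v u' \<le> plen q - j"
    using gdist_le_plen[OF path_between_drop[OF q(1) j(1)]] j by (simp add: plen_def)
  ultimately show ?thesis using q(2) j(1) by (simp add: plen_def)
qed

section \<open>Walks in four-point hyperbolic spaces\<close>

lemma obtain_first_index:
  fixes a b :: nat
  assumes "a \<le> b" and "P b"
  obtains i where "a \<le> i" and "i \<le> b" and "P i" and "a < i \<Longrightarrow> \<not> P (i - 1)"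
proof
  define i where "i = (LEAST i. a \<le> i \<and> P i)"
  show "a \<le> i" and "P i" using LeastI[of "\<lambda>i. a \<le> i \<and> P i", OF conjI[OF assms]] i_def by auto
  show "i \<le> b" unfolding i_def using assms by (intro Least_le) blast
  show "\<not> P (i - 1)" if "a < i"
    using not_less_Least[of "i - 1" "\<lambda>i. a \<le> i \<and> P i"] that i_def by auto
qed

definition gromov_product :: "('a \<Rightarrow> 'a \<Rightarrow> real) \<Rightarrow> 'a \<Rightarrow> 'a \<Rightarrow> 'a \<Rightarrow> real" where
  "gromov_product d w x y = (d w x + d w y - d x y) / 2"

locale four_point_hyperbolic =
  fixes V :: "'a set" and d :: "'a \<Rightarrow> 'a \<Rightarrow> real" and \<delta> :: real
  assumes dist_refl: "x \<in> V \<Longrightarrow> d x x = 0"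
    and dist_sym: "x \<in> V \<Longrightarrow> y \<in> V \<Longrightarrow> d x y = d y x"
    and dist_triangle: "x \<in> V \<Longrightarrow> y \<in> V \<Longrightarrow> z \<in> V \<Longrightarrow> d x z \<le> d x y + d y z"
    and four_point: "w \<in> V \<Longrightarrow> x \<in> V \<Longrightarrow> y \<in> V \<Longrightarrow> z \<in> V \<Longrightarrow>
      d x z + d w y \<le> max (d x y + d w z) (d y z + d w x) + 2 * \<delta>"
begin

lemma delta_nonneg: "x \<in> V \<Longrightarrow> 0 \<le> \<delta>"
  using four_point[of x x x x] dist_refl by simp

lemma gromov_product_four_point:
  assumes "w \<in> V" and "x \<in> V" and "y \<in> V" and "z \<in> V"
  shows "min (gromov_product d w x y) (gromov_product d w y z) - \<delta> \<le> gromov_product d w x z"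
proof -
  have gp: "2 * gromov_product d w a b = d w a + d w b - d a b" for a b
    unfolding gromov_product_def by simp
  show ?thesis using four_point[OF assms] gp[of x y] gp[of y z] gp[of x z] unfolding min_def max_def
    by (simp split: if_splits; linarith)
qed

context
  fixes p :: "nat \<Rightarrow> 'a" and l :: nat
  assumes walk_in_V: "\<And>i. i \<le> l \<Longrightarrow> p i \<in> V"
    and walk_step: "\<And>i. i < l \<Longrightarrow> d (p i) (p (Suc i)) \<le> 1"
begin

lemma dist_walk_le: "i \<le> j \<Longrightarrow> j \<le> l \<Longrightarrow> d (p i) (p j) \<le> real j - real i"
proof (induction j rule: dec_induct)
  case base
  then show ?case using dist_refl walk_in_V by simp
next
  case (step j)
  then have "d (p i) (p (Suc j)) \<le> d (p i) (p j) + d (p j) (p (Suc j))"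
    using dist_triangle walk_in_V by simp
  with step walk_step[of j] show ?case by simp
qed

lemma walk_close_to_point_linear:
  assumes w: "w \<in> V" and ab: "a \<le> b" "b \<le> l"
    and gp_ab: "gromov_product d w (p a) (p b) \<le> \<kappa>"
  obtains i where "a \<le> i" and "i \<le> b"
    and "2 * d w (p i) \<le> 4 * \<kappa> + 4 * \<delta> + 2 + (real b - real a - d (p a) (p b))"
proof -
  have \<delta>: "0 \<le> \<delta>" using delta_nonneg w .
  \<comment> \<open>Take the first \<open>i\<close> with \<open>(p a|p i)\<^sub>w \<le> \<kappa> + \<delta>\<close>; the four-point condition at its
     predecessor \<open>j\<close> gives \<open>(p j|p b)\<^sub>w \<le> \<kappa> + \<delta>\<close>, and the sum of both products bounds \<open>d w (p i)\<close>.\<close>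
  obtain i where i: "a \<le> i" "i \<le> b" and gp_ai: "gromov_product d w (p a) (p i) \<le> \<kappa> + \<delta>"
    and first: "a < i \<Longrightarrow> \<not> gromov_product d w (p a) (p (i - 1)) \<le> \<kappa> + \<delta>"
    using obtain_first_index[of a b "\<lambda>i. gromov_product d w (p a) (p i) \<le> \<kappa> + \<delta>"] ab gp_ab \<delta>
    by auto
  obtain j where j: "a \<le> j" "j \<le> i" "i \<le> Suc j" and gp_jb: "gromov_product d w (p j) (p b) \<le> \<kappa> + \<delta>"
  proof (cases "a < i")
    case True
    have "min (gromov_product d w (p a) (p (i - 1))) (gromov_product d w (p (i - 1)) (p b)) - \<delta> \<le> \<kappa>"
      using gromov_product_four_point[of w "p a" "p (i - 1)" "p b"] w walk_in_V ab i gp_ab by simp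
    with first True have "gromov_product d w (p (i - 1)) (p b) \<le> \<kappa> + \<delta>" by linarith
    with that[of "i - 1"] True show ?thesis by simp
  next
    case False
    with that[of a] i gp_ab \<delta> show ?thesis by simp
  qed
  have V: "p a \<in> V" "p b \<in> V" "p i \<in> V" "p j \<in> V" using walk_in_V ab i j by simp_all
  have "d w (p i) \<le> d w (p j) + d (p j) (p i)" using dist_triangle V w by simp
  moreover have "d (p j) (p b) \<le> d (p j) (p i) + d (p i) (p b)" using dist_triangle V by simp
  moreover have "d (p j) (p i) \<le> real i - real j" and "d (p a) (p i) \<le> real i - real a"
    and "d (p i) (p b) \<le> real b - real i"
    using dist_walk_le ab i j by simp_all
  moreover have "real i \<le> real j + 1" using j(3) by simp
  moreover have "d (p a) (p b) \<le> d w (p a) + d w (p b)"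
    using dist_triangle[of "p a" w "p b"] dist_sym[of w "p a"] V w by simp
  moreover have "d w (p a) + d w (p i) - d (p a) (p i) \<le> 2 * \<kappa> + 2 * \<delta>"
    and "d w (p j) + d w (p b) - d (p j) (p b) \<le> 2 * \<kappa> + 2 * \<delta>"
    using gp_ai gp_jb unfolding gromov_product_def by simp_all
  ultimately have "2 * d w (p i) \<le> 4 * \<kappa> + 4 * \<delta> + 2 + (real b - real a - d (p a) (p b))"
    by linarith
  with i that show ?thesis by blast
qed

lemma walk_excess_split:
  assumes ab: "a \<le> b" "b \<le> l" and excess: "real b - real a - d (p a) (p b) \<le> 4 + \<epsilon>"
  obtains m where "a \<le> m" and "m \<le> b"
    and "real m - real a - d (p a) (p m) \<le> 4 + \<epsilon> / 2"
    and "real b - real m - d (p m) (p b) \<le> 4 + \<epsilon> / 2"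
proof -
  define ex where "ex i j = real j - real i - d (p i) (p j)" for i j
  \<comment> \<open>One step raises \<open>ex a\<close> by at most 2 and \<open>ex\<close> is superadditive, so cutting where \<open>ex a\<close>
     first exceeds \<open>2 + \<epsilon> / 2\<close> leaves at most \<open>4 + \<epsilon> / 2\<close> on either side.\<close>
  have ex_nonneg: "0 \<le> ex i j" if "i \<le> j" "j \<le> l" for i j
    using dist_walk_le that unfolding ex_def by simp
  obtain m where m: "a \<le> m" "m \<le> b" and last: "m = b \<or> ex a (Suc m) > 2 + \<epsilon> / 2"
    and first: "a < m \<Longrightarrow> \<not> (m - 1 = b \<or> ex a (Suc (m - 1)) > 2 + \<epsilon> / 2)"
    using obtain_first_index[of a b "\<lambda>m. m = b \<or> ex a (Suc m) > 2 + \<epsilon> / 2"] ab by blast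
  have "0 \<le> 4 + \<epsilon>" using ex_nonneg[OF ab] excess unfolding ex_def by linarith
  have am: "ex a m \<le> 2 + \<epsilon> / 2"
  proof (cases "a < m")
    case True
    then show ?thesis using first by (simp add: not_less)
  next
    case False
    then show ?thesis using m \<open>0 \<le> 4 + \<epsilon>\<close> dist_refl walk_in_V ab unfolding ex_def by simp
  qed
  have mb: "ex m b \<le> 4 + \<epsilon> / 2"
  proof (cases "m = b")
    case True
    then show ?thesis using \<open>0 \<le> 4 + \<epsilon>\<close> dist_refl walk_in_V ab unfolding ex_def by simp
  next
    case False
    then have "m < l" "ex a (Suc m) > 2 + \<epsilon> / 2" using last m ab by auto
    moreover have "d (p a) (p m) \<le> d (p a) (p (Suc m)) + d (p (Suc m)) (p m)"
      and "d (p a) (p b) \<le> d (p a) (p m) + d (p m) (p b)"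
      using dist_triangle walk_in_V m ab \<open>m < l\<close> by simp_all
    moreover have "d (p (Suc m)) (p m) \<le> 1"
      using walk_step[of m] dist_sym walk_in_V \<open>m < l\<close> by simp
    ultimately show ?thesis using excess am unfolding ex_def by simp
  qed
  from that[OF m] am mb show ?thesis unfolding ex_def by simp
qed

lemma walk_close_to_point:
  assumes w: "w \<in> V" and ab: "a \<le> b" "b \<le> l"
    and gp_ab: "gromov_product d w (p a) (p b) \<le> \<kappa>"
    and excess: "real b - real a - d (p a) (p b) \<le> 4 + \<epsilon>"
  shows "\<exists>i. a \<le> i \<and> i \<le> b \<and> 2 * d w (p i) \<le> 4 * \<kappa> + 4 * (real k + 1) * \<delta> + 6 + \<epsilon> / 2 ^ k"
  using ab gp_ab excess
proof (induction k arbitrary: a b \<kappa> \<epsilon>)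
  case 0
  then obtain i where "a \<le> i" "i \<le> b"
    "2 * d w (p i) \<le> 4 * \<kappa> + 4 * \<delta> + 2 + (real b - real a - d (p a) (p b))"
    using walk_close_to_point_linear w by blast
  with "0.prems"(4) show ?case by force
next
  case (Suc k)
  obtain m where m: "a \<le> m" "m \<le> b"
    and am: "real m - real a - d (p a) (p m) \<le> 4 + \<epsilon> / 2"
    and mb: "real b - real m - d (p m) (p b) \<le> 4 + \<epsilon> / 2"
    using walk_excess_split Suc.prems by blast
  have "min (gromov_product d w (p a) (p m)) (gromov_product d w (p m) (p b)) - \<delta> \<le> \<kappa>"
    using gromov_product_four_point[of w "p a" "p m" "p b"] w walk_in_V m Suc.prems by simp
  then have "gromov_product d w (p a) (p m) \<le> \<kappa> + \<delta> \<or> gromov_product d w (p m) (p b) \<le> \<kappa> + \<delta>"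
    by linarith
  then obtain i where "a \<le> i" "i \<le> b"
    "2 * d w (p i) \<le> 4 * (\<kappa> + \<delta>) + 4 * (real k + 1) * \<delta> + 6 + \<epsilon> / 2 / 2 ^ k"
  proof
    assume "gromov_product d w (p a) (p m) \<le> \<kappa> + \<delta>"
    then obtain i where "a \<le> i" "i \<le> m"
      "2 * d w (p i) \<le> 4 * (\<kappa> + \<delta>) + 4 * (real k + 1) * \<delta> + 6 + \<epsilon> / 2 / 2 ^ k"
      using Suc.IH[of a m "\<kappa> + \<delta>" "\<epsilon> / 2"] m am Suc.prems(2) by auto
    with m that show ?thesis by (meson order_trans)
  next
    assume "gromov_product d w (p m) (p b) \<le> \<kappa> + \<delta>"
    then obtain i where "m \<le> i" "i \<le> b"
      "2 * d w (p i) \<le> 4 * (\<kappa> + \<delta>) + 4 * (real k + 1) * \<delta> + 6 + \<epsilon> / 2 / 2 ^ k"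
      using Suc.IH[of m b "\<kappa> + \<delta>" "\<epsilon> / 2"] m mb Suc.prems(2) by auto
    with m that show ?thesis by (meson order_trans)
  qed
  then show ?case by (intro exI[of _ i]) (simp add: algebra_simps)
qed

lemma walk_close_to_geodesic_point:
  assumes w: "w \<in> V" and gp: "gromov_product d w (p 0) (p l) \<le> 0"
    and excess: "real l - d (p 0) (p l) \<le> \<epsilon>" and \<epsilon>: "\<epsilon> \<le> 2 ^ k"
  obtains i where "i \<le> l" and "d w (p i) \<le> 2 * (real k + 1) * \<delta> + 7 / 2"
proof -
  define t where "t = \<epsilon> / 2 ^ k"
  have "t \<le> 1" using \<epsilon> unfolding t_def by simp
  obtain i where "i \<le> l" and "2 * d w (p i) \<le> 4 * (real k + 1) * \<delta> + 6 + t"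
    using walk_close_to_point[OF w le0 order_refl gp, of \<epsilon> k] excess unfolding t_def by auto
  with \<open>t \<le> 1\<close> that show ?thesis by (simp add: algebra_simps)
qed

end
end

section \<open>The graph metric is four-point hyperbolic\<close>

lemma delta4_le_delta_worst:
  assumes "finite V" and "w1 \<in> V" "w2 \<in> V" "w3 \<in> V" "w4 \<in> V"
  shows "delta4 V E w1 w2 w3 w4 \<le> delta_worst V E"
proof -
  let ?D = "{delta4 V E w1 w2 w3 w4 | w1 w2 w3 w4. w1 \<in> V \<and> w2 \<in> V \<and> w3 \<in> V \<and> w4 \<in> V}"
  have "?D \<subseteq> (\<lambda>(w1, w2, w3, w4). delta4 V E w1 w2 w3 w4) ` (V \<times> V \<times> V \<times> V)"
    by (auto simp: image_iff) blast
  then have "finite ?D" by (rule finite_subset) (simp add: assms(1))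
  then show ?thesis unfolding delta_worst_def by (rule Max_ge) (use assms in blast)
qed

lemma four_point_hyperbolic_gdist:
  assumes G: "finite_connected_graph V E"
  shows "four_point_hyperbolic V (\<lambda>x y. real (gdist V E x y)) (delta_worst V E)"
proof
  fix w x y z assume V: "w \<in> V" "x \<in> V" "y \<in> V" "z \<in> V"
  define A where "A = real (gdist V E x z) + real (gdist V E w y)"
  define B where "B = real (gdist V E y z) + real (gdist V E w x)"
  define C where "C = real (gdist V E x y) + real (gdist V E w z)"
  have "finite V" using G unfolding finite_connected_graph_def by simp
  with V have "delta4 V E x z w y \<le> delta_worst V E" by (simp add: delta4_le_delta_worst)
  moreover have "gdist V E x w = gdist V E w x" "gdist V E z y = gdist V E y z"
    "gdist V E z w = gdist V E w z"
    using gdist_sym[OF G] V by blast+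
  ultimately have "(max A (max B C) - (A + B + C - max A (max B C) - min A (min B C))) / 2
      \<le> delta_worst V E"
    unfolding delta4_def Let_def A_def B_def C_def by (simp add: add.commute)
  then have "A \<le> max C B + 2 * delta_worst V E"
    unfolding max_def min_def by (simp split: if_splits; linarith)
  then show "real (gdist V E x z) + real (gdist V E w y)
    \<le> max (real (gdist V E x y) + real (gdist V E w z)) (real (gdist V E y z) + real (gdist V E w x))
       + 2 * delta_worst V E"
    unfolding A_def B_def C_def .
next
  show "real (gdist V E x x) = 0" if "x \<in> V" for x using gdist_refl[OF that] by simp
  show "real (gdist V E x y) = real (gdist V E y x)" if "x \<in> V" "y \<in> V" for x y
    using gdist_sym[OF G that] by simp
  show "real (gdist V E x z) \<le> real (gdist V E x y) + real (gdist V E y z)"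
    if "x \<in> V" "y \<in> V" "z \<in> V" for x y z
    using gdist_triangle[OF G that] by simp
qed

section \<open>The numerical estimate\<close>

lemma power_of_two_bracket:
  fixes m :: real
  assumes "1 \<le> m"
  obtains n :: nat where "m \<le> 2 ^ n" and "2 ^ n < 2 * m"
proof
  define c where "c = \<lceil>log 2 m\<rceil>"
  have "real (nat c) = of_int c" using assms unfolding c_def by simp
  then have pow: "(2::real) ^ nat c = 2 powr of_int c" by (simp add: powr_realpow[symmetric])
  have "m = 2 powr log 2 m" using assms by simp
  also have "\<dots> \<le> 2 powr of_int c" unfolding c_def by (rule powr_mono) simp_all
  finally show "m \<le> 2 ^ nat c" using pow by simp
  have "2 powr of_int c < 2 powr (log 2 m + 1)" unfolding c_def by (rule powr_less_mono) linarith+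
  also have "\<dots> = 2 * m" using assms by (simp add: powr_add)
  finally show "2 ^ nat c < 2 * m" using pow by simp
qed

lemma cube_root_bound:
  fixes X \<epsilon> :: real
  assumes "0 \<le> \<epsilon>" and "X ^ 3 < 4 * max \<epsilon> 1"
  shows "16 * X < 17 / 2 * (\<epsilon> + 3)"
proof -
  have "(\<epsilon> + 3) ^ 3 = \<epsilon> ^ 3 + 9 * \<epsilon>\<^sup>2 + 27 * \<epsilon> + 27"
    by (simp add: power3_eq_cube power2_eq_square algebra_simps)
  then have cube: "27 * (\<epsilon> + 1) \<le> (\<epsilon> + 3) ^ 3" using assms(1) by simp
  have "4 * max \<epsilon> 1 \<le> 4913 / 32768 * (27 * (\<epsilon> + 1))" using assms(1) by simp
  also have "\<dots> \<le> 4913 / 32768 * (\<epsilon> + 3) ^ 3" using cube by simp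
  also have "\<dots> = (17 / 32 * (\<epsilon> + 3)) ^ 3"
    unfolding power_mult_distrib by (simp add: power3_eq_cube)
  finally have "4 * max \<epsilon> 1 \<le> (17 / 32 * (\<epsilon> + 3)) ^ 3" .
  with assms(2) have "X ^ 3 < (17 / 32 * (\<epsilon> + 3)) ^ 3" by linarith
  then have "X < 17 / 32 * (\<epsilon> + 3)" by (rule power_less_imp_less_base) (use assms(1) in simp)
  then show ?thesis by simp
qed

lemma additive_error_bound:
  fixes \<delta> \<epsilon> \<gamma> :: real and N :: nat
  assumes \<delta>: "0 \<le> \<delta>" and \<epsilon>: "0 \<le> \<epsilon>"
    and \<gamma>: "\<gamma> \<le> 2 * real N * \<delta> + 7 / 2" and N: "2 ^ N < 4 * max \<epsilon> 1"
  shows "\<epsilon> > 2 powr (\<gamma> / (6 * \<delta> + 1)) / (48 * \<delta> + 17 / 2) - log 2 (48 * \<delta> + 8)"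
proof -
  define X where "X = 2 powr (real N / 3)"
  have "(real N / 3 + 7 / 2) * (6 * \<delta> + 1) = 2 * real N * \<delta> + 7 / 2 + (real N / 3 + 21 * \<delta>)"
    by (simp add: algebra_simps)
  then have "\<gamma> \<le> (real N / 3 + 7 / 2) * (6 * \<delta> + 1)" using \<gamma> \<delta> by simp
  then have "\<gamma> / (6 * \<delta> + 1) \<le> real N / 3 + 7 / 2" using \<delta> by (simp add: pos_divide_le_eq)
  then have "2 powr (\<gamma> / (6 * \<delta> + 1)) \<le> 2 powr (real N / 3 + 7 / 2)" by (rule powr_mono) simp
  also have "\<dots> = X * 2 powr (7 / 2)" unfolding X_def by (simp add: powr_add)
  also have "\<dots> \<le> X * 2 powr 4" unfolding X_def by (intro mult_left_mono powr_mono) simp_all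
  also have "\<dots> < 17 / 2 * (\<epsilon> + 3)"
  proof -
    have "X ^ 3 = 2 ^ N" unfolding X_def by (simp add: powr_realpow[symmetric] powr_powr)
    then show ?thesis using cube_root_bound[OF \<epsilon>] N by simp
  qed
  also have "\<dots> \<le> (48 * \<delta> + 17 / 2) * (\<epsilon> + log 2 (48 * \<delta> + 8))"
  proof (rule mult_mono)
    have "3 = log 2 (8::real)" by (simp add: log_pow_cancel[of 2 3, simplified])
    also have "\<dots> \<le> log 2 (48 * \<delta> + 8)" using \<delta> by simp
    finally show "\<epsilon> + 3 \<le> \<epsilon> + log 2 (48 * \<delta> + 8)" by simp
  qed (use \<delta> \<epsilon> in simp_all)
  finally have "2 powr (\<gamma> / (6 * \<delta> + 1)) / (48 * \<delta> + 17 / 2) < \<epsilon> + log 2 (48 * \<delta> + 8)"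
    using \<delta> by (simp add: pos_divide_less_eq mult.commute)
  then show ?thesis by simp
qed

theorem corollary8:
  fixes V :: "'a set" and E :: "'a \<Rightarrow> 'a \<Rightarrow> bool"
    and u0 u1 v :: 'a and P2 :: "'a list" and \<epsilon> \<gamma> :: real
  assumes "finite_connected_graph V E"
    and "card V \<ge> 4"
    and "u0 \<in> V" and "u1 \<in> V"
    and "approx_short_path V E \<epsilon> P2 u0 u1"
    and "\<exists>p. shortest_path V E p u0 u1 \<and> v \<in> set p"
    and "\<forall>v'\<in>set P2. real (gdist V E v v') \<ge> \<gamma>"
  shows "\<epsilon> > 2 powr (\<gamma> / (6 * delta_worst V E + 1)) / (48 * delta_worst V E + 17 / 2)
             - log 2 (48 * delta_worst V E + 8)"
proof -
  note G = assms(1)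
  interpret four_point_hyperbolic V "\<lambda>x y. real (gdist V E x y)" "delta_worst V E"
    using G by (rule four_point_hyperbolic_gdist)
  have P2: "path_between V E P2 u0 u1" and excess: "real (plen P2) - gdist V E u0 u1 \<le> \<epsilon>"
    using assms(5) unfolding approx_short_path_def by auto
  obtain q where q: "shortest_path V E q u0 u1" "v \<in> set q" using assms(6) by blast
  then have "v \<in> V" unfolding shortest_path_def path_between_def is_path_def is_walk_def by blast
  then have gp: "gromov_product (\<lambda>x y. real (gdist V E x y)) v u0 u1 \<le> 0"
    using gdist_shortest_path_split[OF q] gdist_sym[OF G _ assms(3)] unfolding gromov_product_def by simp
  have "0 \<le> \<epsilon>" using gdist_le_plen[OF P2] excess by simp
  obtain n where n: "max \<epsilon> 1 \<le> 2 ^ n" "2 ^ n < 2 * max \<epsilon> 1"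
    using power_of_two_bracket[of "max \<epsilon> 1"] by auto
  obtain i where "i \<le> plen P2" and i: "gdist V E v (P2 ! i) \<le> 2 * (real n + 1) * delta_worst V E + 7 / 2"
    using walk_close_to_geodesic_point[of "plen P2" "(!) P2" v \<epsilon> n] path_between_nth[OF P2]
      gdist_edge[OF G] \<open>v \<in> V\<close> gp excess n(1) by force
  have "i < length P2" using \<open>i \<le> plen P2\<close> path_between_nth(1)[OF P2] by linarith
  then have "\<gamma> \<le> gdist V E v (P2 ! i)" using assms(7) nth_mem by blast
  with i have "\<gamma> \<le> 2 * real (Suc n) * delta_worst V E + 7 / 2" by (simp add: algebra_simps)
  moreover have "2 ^ Suc n < 4 * max \<epsilon> 1" using n(2) by simp
  ultimately show ?thesis by (rule additive_error_bound[OF delta_nonneg[OF assms(3)] \<open>0 \<le> \<epsilon>\<close>])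
qed

end
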